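(* Fix $\vartheta>0$ and let $I_n^{(\vartheta)}$ be the internal path length of a Hoppe tree with parameter $\vartheta$ and $n$ nodes. Then, as $n\to\infty$, \begin{align*} \mathbb{E}[I_n^{(\vartheta)}]&= (\vartheta+n-1)\sum_{i=1}^{n-1} \frac{1}{\vartheta+i} = n \log n -\Psi(\vartheta+1) n + o(n),\\ \mathrm{Var}(I_n^{(\vartheta)}) &= \left( \frac{2}{\vartheta+1} - \Psi_1(\vartheta+1)\right) n^2 + o(n^2). \end{align*} Moreover, $$\left( \frac{I_n^{(\vartheta)}-\mathbb{E}[I_n^{(\vartheta)}]}{\vartheta+n-1} \right)_{n\geq 1}$$ is a zero-mean martingale.
   Context: Hoppe tree with parameter $\vartheta>0$: the tree is grown by successive insertion of nodes, labelled $1,2,\ldots$ in order of insertion, all on one probability space (so the trees with $n=1,2,\ldots$ nodes form a growing sequence). Initially there is only the root. In each step a parent node is chosen among the existing nodes, independently of the past, with probability proportional to its weight, where the root has weight $\vartheta$ and every other node has weight $1$; a new node is attached as a child of the chosen node. The depth $D_i^{(\vartheta)}$ of node $i$ is its distance to the root, and the internal path length of the tree with $n$ nodes is $I_n^{(\vartheta)}=\sum_{i=1}^n D_i^{(\vartheta)}$. $\Psi=\frac{d}{dx}\log\Gamma$ is the digamma function and $\Psi_1=\frac{d^2}{dx^2}\log\Gamma$ the trigamma function. *)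

theory Defs
  imports "HOL-Probability.Probability" "HOL-Library.Landau_Symbols"
begin

text \<open>Hoppe tree encoding: node 1 is the root; for i \<ge> 2 the value p i is the
  parent of node i (a node in 1..i-1). Depth of a node given the parent map.\<close>

function hoppe_depth :: "(nat \<Rightarrow> nat) \<Rightarrow> nat \<Rightarrow> nat" where
  "hoppe_depth p i =
     (if i \<le> 1 then 0
      else if 1 \<le> p i \<and> p i < i then Suc (hoppe_depth p (p i)) else 0)"
  by auto
termination by (relation "Wellfounded.measure snd") auto

text \<open>Probability that node i (i \<ge> 2) picks parent j: the root (node 1) has weight
  theta, each of the other existing nodes 2..i-1 has weight 1; total weight theta + i - 2.\<close>

definition hoppe_parent_prob :: "real \<Rightarrow> nat \<Rightarrow> nat \<Rightarrow> real" where
  "hoppe_parent_prob theta i j =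
     (if j = 1 then theta else if 2 \<le> j \<and> j < i then 1 else 0) / (theta + real i - 2)"

definition hoppe_ipl :: "(nat \<Rightarrow> nat) \<Rightarrow> nat \<Rightarrow> nat" where
  "hoppe_ipl p n = (\<Sum>i=1..n. hoppe_depth p i)"

text \<open>Natural filtration of the growing tree: the tree with n nodes is determined by
  the parent choices of nodes 2..n.\<close>

definition hoppe_filtration :: "'a measure \<Rightarrow> (nat \<Rightarrow> 'a \<Rightarrow> nat) \<Rightarrow> nat \<Rightarrow> 'a measure" where
  "hoppe_filtration M P n =
     sigma (space M) {P i -` A \<inter> space M | i A. 2 \<le> i \<and> i \<le> n}"

definition real_martingale_from ::
  "nat \<Rightarrow> 'a measure \<Rightarrow> (nat \<Rightarrow> 'a measure) \<Rightarrow> (nat \<Rightarrow> 'a \<Rightarrow> real) \<Rightarrow> bool" where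
  "real_martingale_from k M F X \<longleftrightarrow>
     (\<forall>n\<ge>k. subalgebra M (F n)) \<and>
     (\<forall>n m. k \<le> n \<and> n \<le> m \<longrightarrow> sets (F n) \<subseteq> sets (F m)) \<and>
     (\<forall>n\<ge>k. X n \<in> borel_measurable (F n)) \<and>
     (\<forall>n\<ge>k. integrable M (X n)) \<and>
     (\<forall>n\<ge>k. AE x in M. real_cond_exp M (F n) (X (Suc n)) x = X n x)"

end

theory Submission
  imports Defs "HOL-Real_Asymp.Real_Asymp"
begin

text \<open>
  Write a = \<vartheta> + n - 1 for the total weight when node n + 1 is inserted. The new node becomes a
  child of the root (depth 0) with probability \<vartheta>/a and of each j \<in> {2..n} with probability 1/a, so
  given the first n nodes its depth has mean 1 + I(n)/a and second moment 1 + 2 I(n)/a + Q(n)/a,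
  where Q(n) is the sum of the squared depths. Hence E[I(n+1) | F(n)] = (a+1)/a I(n) + 1, which makes
  I(n)/a - H(n) a martingale and gives E I(n) = a H(n), where H(n) = \<Sum>{1 \<le> i < n} 1/(\<vartheta>+i).
  The same recursion for second moments gives Var I(n) = a (a+1) T(n), where
  T(n) = \<Sum>{1 \<le> k < n} (H(k) - G(k)) / ((\<vartheta>+k)(\<vartheta>+k+1)) and G(n) = \<Sum>{1 \<le> i < n} 1/(\<vartheta>+i)^2
  (shifted_harmonic, ipl_variance_sum and shifted_harmonic2 below). The asymptotics follow from the
  series for digamma and trigamma, after a summation by parts in T(n).

  Everything about the tree with n nodes is a function of P 2, ..., P n, which are independent and
  finitely valued, so all expectations reduce to finite sums over the possible parent maps.
\<close>

definition shifted_harmonic :: "real \<Rightarrow> nat \<Rightarrow> real" where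
  "shifted_harmonic t n = (\<Sum>i=1..<n. 1 / (t + real i))"

definition shifted_harmonic2 :: "real \<Rightarrow> nat \<Rightarrow> real" where
  "shifted_harmonic2 t n = (\<Sum>i=1..<n. 1 / (t + real i)^2)"

definition ipl_variance_sum :: "real \<Rightarrow> nat \<Rightarrow> real" where
  "ipl_variance_sum t n =
     (\<Sum>k=1..<n. (shifted_harmonic t k - shifted_harmonic2 t k) / ((t + real k) * (t + real k + 1)))"

lemma shifted_harmonic_le_1 [simp]: "n \<le> 1 \<Longrightarrow> shifted_harmonic t n = 0"
  and shifted_harmonic2_le_1 [simp]: "n \<le> 1 \<Longrightarrow> shifted_harmonic2 t n = 0"
  and ipl_variance_sum_le_1 [simp]: "n \<le> 1 \<Longrightarrow> ipl_variance_sum t n = 0"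
  by (simp_all add: shifted_harmonic_def shifted_harmonic2_def ipl_variance_sum_def)

lemma shifted_harmonic_Suc:
    "n \<ge> 1 \<Longrightarrow> shifted_harmonic t (Suc n) = shifted_harmonic t n + 1 / (t + real n)"
  and shifted_harmonic2_Suc:
    "n \<ge> 1 \<Longrightarrow> shifted_harmonic2 t (Suc n) = shifted_harmonic2 t n + 1 / (t + real n)^2"
  and ipl_variance_sum_Suc:
    "n \<ge> 1 \<Longrightarrow> ipl_variance_sum t (Suc n) = ipl_variance_sum t n
       + (shifted_harmonic t n - shifted_harmonic2 t n) / ((t + real n) * (t + real n + 1))"
  by (simp_all add: shifted_harmonic_def shifted_harmonic2_def ipl_variance_sum_def)

lemma shifted_harmonic_Suc_eq: "shifted_harmonic t (Suc m) = (\<Sum>k<m. inverse (t + 1 + real k))"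
  by (induction m) (auto simp: shifted_harmonic_Suc add_ac divide_inverse)

lemma shifted_harmonic2_Suc_eq: "shifted_harmonic2 t (Suc m) = (\<Sum>k<m. inverse ((t + 1 + real k)^2))"
  by (induction m) (auto simp: shifted_harmonic2_Suc add_ac divide_inverse)

lemma shifted_harmonic_minus_ln_tendsto:
  assumes "t > 0"
  shows "(\<lambda>m. shifted_harmonic t (Suc m) - ln (real m)) \<longlonglongrightarrow> - Digamma (t + 1)"
proof -
  have "(\<lambda>m. ln (real m) - (\<Sum>k<m. inverse (t + 1 + real k))) \<longlonglongrightarrow> Digamma (t + 1)"
    using Digamma_LIMSEQ[of "t + 1"] assms by simp
  from tendsto_minus[OF this] show ?thesis
    by (simp add: shifted_harmonic_Suc_eq)
qed

lemma trigamma_sums: "t > 0 \<Longrightarrow> (\<lambda>k. inverse ((t + 1 + real k)^2)) sums Polygamma 1 (t + 1)"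
  using Polygamma_LIMSEQ[of "t + 1" 1] by (simp add: numeral_2_eq_2)

lemma shifted_harmonic2_tendsto:
  "t > 0 \<Longrightarrow> (\<lambda>m. shifted_harmonic2 t (Suc m)) \<longlonglongrightarrow> Polygamma 1 (t + 1)"
  using trigamma_sums by (simp add: sums_def shifted_harmonic2_Suc_eq)

lemma shifted_harmonic_asymp:
  assumes "t > 0"
  shows "(\<lambda>n. (t + real n - 1) * shifted_harmonic t n - (real n * ln (real n) - Digamma (t + 1) * real n))
           \<in> o(\<lambda>n. real n)"
proof (rule smalloI_tendsto)
  define u where "u n = shifted_harmonic t n - ln (real n) + Digamma (t + 1)" for n
  have "(\<lambda>m. (shifted_harmonic t (Suc m) - ln (real m)) + Digamma (t + 1) + (ln (real m) - ln (real (Suc m))))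
          \<longlonglongrightarrow> - Digamma (t + 1) + Digamma (t + 1) + 0"
    by (intro tendsto_add shifted_harmonic_minus_ln_tendsto assms tendsto_const) real_asymp
  then have "(\<lambda>m. u (Suc m)) \<longlonglongrightarrow> 0"
    by (simp add: u_def algebra_simps)
  then have u: "u \<longlonglongrightarrow> 0"
    by (rule filterlim_sequentially_Suc[THEN iffD1])
  have "(\<lambda>n. (t - 1) * (ln (real n) / real n) - (t - 1) * Digamma (t + 1) * (1 / real n)
            + ((t + real n - 1) / real n) * u n) \<longlonglongrightarrow> (t - 1) * 0 - (t - 1) * Digamma (t + 1) * 0 + 1 * 0"
      (is "?g \<longlonglongrightarrow> _")
    by (intro tendsto_add tendsto_diff tendsto_mult tendsto_const u; real_asymp)
  moreover have "\<forall>\<^sub>F n in sequentially. ?g n = ((t + real n - 1) * shifted_harmonic t n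
                 - (real n * ln (real n) - Digamma (t + 1) * real n)) / real n"
    using eventually_gt_at_top[of "0::nat"] by eventually_elim (simp add: u_def field_simps)
  ultimately show "((\<lambda>n. ((t + real n - 1) * shifted_harmonic t n
                 - (real n * ln (real n) - Digamma (t + 1) * real n)) / real n) \<longlongrightarrow> 0) sequentially"
    by (auto intro: Lim_transform_eventually)
  show "\<forall>\<^sub>F n in sequentially. real n \<noteq> 0"
    using eventually_gt_at_top[of "0::nat"] by eventually_elim simp
qed

lemma ipl_variance_sum_by_parts:
  assumes "t > 0"
  shows "ipl_variance_sum t (Suc N)
           = (\<Sum>k<N. (1 / (t + real k + 1) - 1 / (t + real k + 1)^2) / (t + real k + 2))
             - (shifted_harmonic t (Suc N) - shifted_harmonic2 t (Suc N)) / (t + real N + 1)"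
proof (induction N)
  case (Suc N)
  define a where "a = t + real N + 1"
  define f where "f = shifted_harmonic t (Suc N) - shifted_harmonic2 t (Suc N)"
  define S where "S = (\<Sum>k<N. (1 / (t + real k + 1) - 1 / (t + real k + 1)^2) / (t + real k + 2))"
  have a: "a > 0" using assms by (simp add: a_def)
  have "ipl_variance_sum t (Suc (Suc N)) = S - f / a + f / (a * (a + 1))"
    using Suc.IH by (simp add: ipl_variance_sum_Suc S_def f_def a_def add_ac)
  also have "\<dots> = S + (1/a - 1/a^2) / (a + 1) - (f + 1/a - 1/a^2) / (a + 1)"
    using a by (simp add: divide_simps) (simp add: algebra_simps power2_eq_square)
  also have "\<dots> = (\<Sum>k<Suc N. (1 / (t + real k + 1) - 1 / (t + real k + 1)^2) / (t + real k + 2))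
      - (shifted_harmonic t (Suc (Suc N)) - shifted_harmonic2 t (Suc (Suc N))) / (t + real (Suc N) + 1)"
    by (simp add: S_def a_def f_def shifted_harmonic_Suc shifted_harmonic2_Suc add_ac)
  finally show ?case .
qed simp

lemma ipl_variance_sum_tendsto:
  assumes "t > 0"
  shows "ipl_variance_sum t \<longlonglongrightarrow> 2 / (t + 1) - Polygamma 1 (t + 1)"
proof -
  define g where "g k = (1 / (t + real k + 1) - 1 / (t + real k + 1)^2) / (t + real k + 2)" for k
  have "(\<lambda>k. 1 / (t + 1 + real k) - 1 / (t + 1 + real (Suc k))) sums (1 / (t + 1 + real 0) - 0)"
    by (rule telescope_sums') real_asymp
  from sums_diff[OF sums_mult[OF this, of 2] trigamma_sums[OF assms]]
  have "(\<lambda>k. 2 * (1 / (t + 1 + real k) - 1 / (t + 1 + real (Suc k))) - inverse ((t + 1 + real k)^2))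
          sums (2 / (t + 1) - Polygamma 1 (t + 1))"
    by simp
  moreover have "2 * (1 / (t + 1 + real k) - 1 / (t + 1 + real (Suc k))) - inverse ((t + 1 + real k)^2) = g k"
    for k
  proof -
    have "2 * (1/b - 1/(b + 1)) - inverse (b^2) = (1/b - 1/b^2) / (b + 1)" if "b > 0" for b :: real
      using that by (simp add: divide_simps) (simp add: algebra_simps power2_eq_square)
    from this[of "t + 1 + real k"] show ?thesis
      using assms by (simp add: g_def add_ac)
  qed
  ultimately have "(\<lambda>N. \<Sum>k<N. g k) \<longlonglongrightarrow> 2 / (t + 1) - Polygamma 1 (t + 1)"
    by (simp add: sums_def)
  \<comment> \<open>the boundary term vanishes because H(N+1) - ln N converges\<close>
  moreover have "(\<lambda>N. ((shifted_harmonic t (Suc N) - ln (real N)) * (1 / (t + real N + 1))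
                    + ln (real N) / (t + real N + 1) - shifted_harmonic2 t (Suc N) * (1 / (t + real N + 1))))
                 \<longlonglongrightarrow> - Digamma (t + 1) * 0 + 0 - Polygamma 1 (t + 1) * 0"
    by (intro tendsto_diff tendsto_add tendsto_mult shifted_harmonic_minus_ln_tendsto
          shifted_harmonic2_tendsto assms; real_asymp)
  ultimately have "(\<lambda>N. ipl_variance_sum t (Suc N)) \<longlonglongrightarrow> 2 / (t + 1) - Polygamma 1 (t + 1)"
    using tendsto_diff by (fastforce simp: ipl_variance_sum_by_parts[OF assms] g_def diff_divide_distrib
        add_divide_distrib algebra_simps)
  then show ?thesis
    by (rule filterlim_sequentially_Suc[THEN iffD1])
qed

lemma ipl_variance_sum_asymp:
  assumes "t > 0"
  shows "(\<lambda>n. (t + real n - 1) * (t + real n) * ipl_variance_sum t n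
            - (2 / (t + 1) - Polygamma 1 (t + 1)) * (real n)^2) \<in> o(\<lambda>n. (real n)^2)"
proof (rule smalloI_tendsto)
  define L where "L = 2 / (t + 1) - Polygamma 1 (t + 1)"
  have "(\<lambda>n. ((t + real n - 1) * (t + real n) / (real n)^2) * ipl_variance_sum t n - L) \<longlonglongrightarrow> 1 * L - L"
      (is "?g \<longlonglongrightarrow> _")
    by (intro tendsto_diff tendsto_mult ipl_variance_sum_tendsto[OF assms, folded L_def] tendsto_const)
       real_asymp
  moreover have "\<forall>\<^sub>F n in sequentially. ?g n = ((t + real n - 1) * (t + real n) * ipl_variance_sum t n
                   - L * (real n)^2) / (real n)^2"
    using eventually_gt_at_top[of "0::nat"] by eventually_elim (simp add: field_simps)
  ultimately show "((\<lambda>n. ((t + real n - 1) * (t + real n) * ipl_variance_sum t n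
                   - (2 / (t + 1) - Polygamma 1 (t + 1)) * (real n)^2) / (real n)^2) \<longlongrightarrow> 0) sequentially"
    by (auto simp: L_def intro: Lim_transform_eventually)
  show "\<forall>\<^sub>F n in sequentially. (real n)^2 \<noteq> 0"
    using eventually_gt_at_top[of "0::nat"] by eventually_elim simp
qed

declare hoppe_depth.simps [simp del]

definition node_depth :: "(nat \<Rightarrow> nat) \<Rightarrow> nat \<Rightarrow> real" where
  "node_depth p i = real (hoppe_depth p i)"

definition path_length :: "(nat \<Rightarrow> nat) \<Rightarrow> nat \<Rightarrow> real" where
  "path_length p n = real (hoppe_ipl p n)"

definition sq_depth_sum :: "(nat \<Rightarrow> nat) \<Rightarrow> nat \<Rightarrow> real" where
  "sq_depth_sum p n = (\<Sum>i=1..n. (node_depth p i)^2)"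

lemma path_length_eq_sum: "path_length p n = (\<Sum>i=1..n. node_depth p i)"
  by (simp add: path_length_def hoppe_ipl_def node_depth_def)

lemma hoppe_depth_cong: "(\<And>k. k \<in> {2..i} \<Longrightarrow> p k = p' k) \<Longrightarrow> hoppe_depth p i = hoppe_depth p' i"
proof (induction i rule: less_induct)
  case (less i)
  show ?case
  proof (cases "2 \<le> i \<and> 1 \<le> p i \<and> p i < i")
    case True
    then have "hoppe_depth p (p i) = hoppe_depth p' (p i)"
      by (intro less.IH less.prems) auto
    with True less.prems[of i] show ?thesis
      by (subst (1 2) hoppe_depth.simps) simp
  next
    case False
    with less.prems[of i] show ?thesis
      by (subst (1 2) hoppe_depth.simps) auto
  qed
qed

lemma node_depth_root [simp]: "node_depth p (Suc 0) = 0"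
  by (simp add: node_depth_def hoppe_depth.simps)

lemma node_depth_upd_old: "j \<le> n \<Longrightarrow> node_depth (p(Suc n := y)) j = node_depth p j"
  unfolding node_depth_def by (rule arg_cong[where f = real], rule hoppe_depth_cong) auto

lemma node_depth_upd_new: "1 \<le> j \<Longrightarrow> j \<le> n \<Longrightarrow> node_depth (p(Suc n := j)) (Suc n) = 1 + node_depth p j"
proof -
  assume "1 \<le> j" "j \<le> n"
  then have "hoppe_depth (p(Suc n := j)) (Suc n) = Suc (hoppe_depth (p(Suc n := j)) j)"
    by (subst hoppe_depth.simps) auto
  with \<open>j \<le> n\<close> show ?thesis
    using node_depth_upd_old[of j n p j] by (simp add: node_depth_def)
qed

lemma path_length_Suc: "path_length p (Suc n) = path_length p n + node_depth p (Suc n)"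
  by (simp add: path_length_eq_sum)

lemma sq_depth_sum_Suc: "sq_depth_sum p (Suc n) = sq_depth_sum p n + (node_depth p (Suc n))^2"
  by (simp add: sq_depth_sum_def)

lemma path_length_from_2: "n \<ge> 1 \<Longrightarrow> path_length p n = (\<Sum>i=2..n. node_depth p i)"
  and sq_depth_sum_from_2: "n \<ge> 1 \<Longrightarrow> sq_depth_sum p n = (\<Sum>i=2..n. (node_depth p i)^2)"
proof -
  assume "n \<ge> 1"
  then have "{1..n} = insert 1 {2..n}" by auto
  then show "path_length p n = (\<Sum>i=2..n. node_depth p i)"
    and "sq_depth_sum p n = (\<Sum>i=2..n. (node_depth p i)^2)"
    by (simp_all add: path_length_eq_sum sq_depth_sum_def)
qed

definition determined_upto :: "nat \<Rightarrow> ((nat \<Rightarrow> nat) \<Rightarrow> 'b) \<Rightarrow> bool" where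
  "determined_upto n F \<longleftrightarrow> (\<forall>p p'. (\<forall>k\<in>{2..n}. p k = p' k) \<longrightarrow> F p = F p')"

lemma determined_upto_mono: "determined_upto n F \<Longrightarrow> n \<le> m \<Longrightarrow> determined_upto m F"
  unfolding determined_upto_def by auto

lemma determined_upto_upd: "determined_upto n F \<Longrightarrow> F (p(Suc n := y)) = F p"
  unfolding determined_upto_def by auto

lemma determined_upto_const: "determined_upto n (\<lambda>_. c)"
  unfolding determined_upto_def by simp

lemma determined_upto_compose:
  "determined_upto n F \<Longrightarrow> determined_upto n (\<lambda>p. h (F p))"
  unfolding determined_upto_def by metis

lemma determined_upto_compose2:
  "determined_upto n F \<Longrightarrow> determined_upto n G \<Longrightarrow> determined_upto n (\<lambda>p. h (F p) (G p))"
  unfolding determined_upto_def by metis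

lemma determined_upto_path_length: "determined_upto n (\<lambda>p. path_length p n)"
  and determined_upto_sq_depth_sum: "determined_upto n (\<lambda>p. sq_depth_sum p n)"
  unfolding determined_upto_def path_length_eq_sum sq_depth_sum_def node_depth_def
  by (auto intro!: sum.cong arg_cong[where f = real] hoppe_depth_cong)

definition parent_maps :: "nat \<Rightarrow> (nat \<Rightarrow> nat) set" where
  "parent_maps n = PiE {2..n} (\<lambda>i. {1..<i})"

definition parent_map_prob :: "real \<Rightarrow> nat \<Rightarrow> (nat \<Rightarrow> nat) \<Rightarrow> real" where
  "parent_map_prob t n v = (\<Prod>i\<in>{2..n}. hoppe_parent_prob t i (v i))"

definition tree_expectation :: "real \<Rightarrow> nat \<Rightarrow> ((nat \<Rightarrow> nat) \<Rightarrow> real) \<Rightarrow> real" where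
  "tree_expectation t n F = (\<Sum>v\<in>parent_maps n. F v * parent_map_prob t n v)"

lemma finite_parent_maps: "finite (parent_maps n)"
  unfolding parent_maps_def by (intro finite_PiE) auto

lemma parent_maps_Suc:
  "n \<ge> 1 \<Longrightarrow> parent_maps (Suc n) = (\<lambda>(y, v). v(Suc n := y)) ` ({1..n} \<times> parent_maps n)"
proof -
  assume "n \<ge> 1"
  then have "{2..Suc n} = insert (Suc n) {2..n}" by auto
  then show ?thesis unfolding parent_maps_def by (simp add: PiE_insert_eq atLeastLessThanSuc_atLeastAtMost)
qed

lemma parent_map_prob_upd:
  "n \<ge> 1 \<Longrightarrow> parent_map_prob t (Suc n) (v(Suc n := y)) = hoppe_parent_prob t (Suc n) y * parent_map_prob t n v"
proof -
  assume "n \<ge> 1"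
  then have "{2..Suc n} = insert (Suc n) {2..n}" by auto
  then show ?thesis unfolding parent_map_prob_def by (auto intro!: prod.cong)
qed

lemma tree_expectation_Suc:
  assumes "n \<ge> 1"
  shows "tree_expectation t (Suc n) F
           = tree_expectation t n (\<lambda>p. \<Sum>y=1..n. hoppe_parent_prob t (Suc n) y * F (p(Suc n := y)))"
proof -
  have inj: "inj_on (\<lambda>(y, v). v(Suc n := y)) ({1..n} \<times> parent_maps n)"
    using inj_combinator[of "Suc n" "{2..n}" "\<lambda>i. {1..<i}"]
    by (simp add: parent_maps_def atLeastLessThanSuc_atLeastAtMost)
  have "tree_expectation t (Suc n) F
      = (\<Sum>y=1..n. \<Sum>v\<in>parent_maps n. F (v(Suc n := y)) * (hoppe_parent_prob t (Suc n) y * parent_map_prob t n v))"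
    unfolding tree_expectation_def parent_maps_Suc[OF assms] sum.reindex[OF inj]
    by (simp add: sum.cartesian_product parent_map_prob_upd[OF assms] case_prod_unfold)
  also have "\<dots> = tree_expectation t n (\<lambda>p. \<Sum>y=1..n. hoppe_parent_prob t (Suc n) y * F (p(Suc n := y)))"
    unfolding tree_expectation_def sum_distrib_right
    by (subst sum.swap) (simp add: mult_ac sum_distrib_left)
  finally show ?thesis .
qed

lemma tree_expectation_cong:
  "(\<And>v. v \<in> parent_maps n \<Longrightarrow> F v = G v) \<Longrightarrow> tree_expectation t n F = tree_expectation t n G"
  unfolding tree_expectation_def by (auto intro!: sum.cong)

lemma tree_expectation_add: "tree_expectation t n (\<lambda>p. F p + G p) = tree_expectation t n F + tree_expectation t n G"
  and tree_expectation_diff: "tree_expectation t n (\<lambda>p. F p - G p) = tree_expectation t n F - tree_expectation t n G"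
  and tree_expectation_cmult: "tree_expectation t n (\<lambda>p. c * F p) = c * tree_expectation t n F"
  and tree_expectation_divide: "tree_expectation t n (\<lambda>p. F p / c) = tree_expectation t n F / c"
  unfolding tree_expectation_def
  by (simp_all add: sum.distrib sum_subtractf sum_distrib_left sum_divide_distrib algebra_simps)

lemma tree_expectation_le_1: "n \<le> 1 \<Longrightarrow> tree_expectation t n F = F (\<lambda>_. undefined)"
  by (simp add: tree_expectation_def parent_maps_def parent_map_prob_def)

lemma parent_prob_average:
  assumes "n \<ge> 1"
  shows "(\<Sum>y=1..n. hoppe_parent_prob t (Suc n) y * f y) = (t * f 1 + (\<Sum>y=2..n. f y)) / (t + real n - 1)"
proof -
  have "{1..n} = insert 1 {2..n}" using assms by auto
  then show ?thesis
    by (simp add: hoppe_parent_prob_def sum_divide_distrib add_divide_distrib)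
qed

lemma parent_prob_sum: "t > 0 \<Longrightarrow> n \<ge> 1 \<Longrightarrow> (\<Sum>y=1..n. hoppe_parent_prob t (Suc n) y) = 1"
  using parent_prob_average[of n t "\<lambda>_. 1"] by simp

lemma parent_prob_average_new_depth:
  assumes "t > 0" "n \<ge> 1"
  shows "(\<Sum>y=1..n. hoppe_parent_prob t (Suc n) y * (1 + node_depth p y))
           = 1 + path_length p n / (t + real n - 1)"
    and "(\<Sum>y=1..n. hoppe_parent_prob t (Suc n) y * (1 + node_depth p y)^2)
           = 1 + 2 * (path_length p n / (t + real n - 1)) + sq_depth_sum p n / (t + real n - 1)"
proof -
  have d: "(\<Sum>y=1..n. hoppe_parent_prob t (Suc n) y * node_depth p y) = path_length p n / (t + real n - 1)"
    unfolding parent_prob_average[OF assms(2)] path_length_from_2[OF assms(2)] by simp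
  have d2: "(\<Sum>y=1..n. hoppe_parent_prob t (Suc n) y * (node_depth p y)^2) = sq_depth_sum p n / (t + real n - 1)"
    unfolding parent_prob_average[OF assms(2)] sq_depth_sum_from_2[OF assms(2)] by simp
  have sq: "(1 + d)^2 = 1 + 2 * d + d^2" for d :: real
    by (simp add: power2_eq_square algebra_simps)
  show "(\<Sum>y=1..n. hoppe_parent_prob t (Suc n) y * (1 + node_depth p y))
          = 1 + path_length p n / (t + real n - 1)"
    by (simp only: distrib_left sum.distrib mult_1_right parent_prob_sum[OF assms] d)
  show "(\<Sum>y=1..n. hoppe_parent_prob t (Suc n) y * (1 + node_depth p y)^2)
          = 1 + 2 * (path_length p n / (t + real n - 1)) + sq_depth_sum p n / (t + real n - 1)"
    by (simp only: sq distrib_left sum.distrib mult_1_right parent_prob_sum[OF assms] d d2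
        mult.left_commute[of _ 2] sum_distrib_left[symmetric])
qed

lemma tree_expectation_extend:
  "t > 0 \<Longrightarrow> n \<ge> 1 \<Longrightarrow> determined_upto n F \<Longrightarrow> tree_expectation t (Suc n) F = tree_expectation t n F"
  by (simp only: tree_expectation_Suc determined_upto_upd sum_distrib_right[symmetric] parent_prob_sum
      mult_1_left)

lemma tree_expectation_const: "t > 0 \<Longrightarrow> tree_expectation t n (\<lambda>_. c) = c"
proof (induction n)
  case (Suc n)
  then show ?case
    by (cases "n = 0") (simp_all add: tree_expectation_le_1 tree_expectation_extend determined_upto_const)
qed (simp add: tree_expectation_le_1)

lemma tree_expectation_new_depth:
  assumes "t > 0" "n \<ge> 1" "determined_upto n F"
  shows "tree_expectation t (Suc n) (\<lambda>p. F p * g (node_depth p (Suc n)))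
       = tree_expectation t n (\<lambda>p. F p * (\<Sum>y=1..n. hoppe_parent_prob t (Suc n) y * g (1 + node_depth p y)))"
  unfolding tree_expectation_Suc[OF assms(2)]
  by (rule tree_expectation_cong)
     (auto simp: assms(3) determined_upto_upd node_depth_upd_new sum_distrib_left mult_ac intro!: sum.cong)

lemma tree_expectation_mult_new_depth:
  assumes "t > 0" "n \<ge> 1" "determined_upto n F"
  shows "tree_expectation t (Suc n) (\<lambda>p. F p * node_depth p (Suc n))
           = tree_expectation t n F + tree_expectation t n (\<lambda>p. F p * path_length p n) / (t + real n - 1)"
proof -
  have "tree_expectation t (Suc n) (\<lambda>p. F p * node_depth p (Suc n))
      = tree_expectation t n (\<lambda>p. F p * (1 + path_length p n / (t + real n - 1)))"
    using tree_expectation_new_depth[OF assms, of "\<lambda>x. x"]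
    unfolding parent_prob_average_new_depth(1)[OF assms(1,2)] by simp
  then show ?thesis
    by (simp add: distrib_left tree_expectation_add tree_expectation_divide)
qed

lemma tree_expectation_mult_path_length_Suc:
  assumes "t > 0" "n \<ge> 1" "determined_upto n F"
  shows "tree_expectation t (Suc n) (\<lambda>p. F p * path_length p (Suc n))
           = ((t + real n) / (t + real n - 1)) * tree_expectation t n (\<lambda>p. F p * path_length p n)
             + tree_expectation t n F"
proof -
  have "t + real n - 1 > 0" using assms by simp
  moreover have "tree_expectation t (Suc n) (\<lambda>p. F p * path_length p n) = tree_expectation t n (\<lambda>p. F p * path_length p n)"
    using tree_expectation_extend[OF assms(1,2) determined_upto_compose2[OF assms(3) determined_upto_path_length]] .
  ultimately show ?thesis
    unfolding path_length_Suc distrib_left tree_expectation_add tree_expectation_mult_new_depth[OF assms]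
    by (simp add: field_simps)
qed

lemma tree_expectation_new_depth_sq:
  assumes "t > 0" "n \<ge> 1"
  shows "tree_expectation t (Suc n) (\<lambda>p. (node_depth p (Suc n))^2)
           = 1 + 2 * (tree_expectation t n (\<lambda>p. path_length p n) / (t + real n - 1))
             + tree_expectation t n (\<lambda>p. sq_depth_sum p n) / (t + real n - 1)"
proof -
  have "tree_expectation t (Suc n) (\<lambda>p. (node_depth p (Suc n))^2)
      = tree_expectation t n (\<lambda>p. 1 + (2 / (t + real n - 1)) * path_length p n + (1 / (t + real n - 1)) * sq_depth_sum p n)"
    using tree_expectation_new_depth[OF assms determined_upto_const, of 1 "\<lambda>x. x^2"]
    unfolding parent_prob_average_new_depth(2)[OF assms] by simp
  then show ?thesis
    by (simp add: tree_expectation_add tree_expectation_cmult tree_expectation_divide tree_expectation_const assms)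
qed

lemma tree_expectation_path_length:
  "t > 0 \<Longrightarrow> tree_expectation t n (\<lambda>p. path_length p n) = (t + real n - 1) * shifted_harmonic t n"
proof (induction n)
  case (Suc n)
  show ?case
  proof (cases "n = 0")
    case False
    then have n: "n \<ge> 1" and a: "t + real n - 1 > 0" using Suc by simp_all
    have "tree_expectation t (Suc n) (\<lambda>p. path_length p (Suc n))
        = (t + real n) / (t + real n - 1) * ((t + real n - 1) * shifted_harmonic t n) + 1"
      using tree_expectation_mult_path_length_Suc[OF Suc.prems n determined_upto_const[of n 1]]
      by (simp only: mult_1_left tree_expectation_const[OF Suc.prems] Suc.IH[OF Suc.prems])
    also have "\<dots> = (t + real (Suc n) - 1) * shifted_harmonic t (Suc n)"
      using a n by (simp add: shifted_harmonic_Suc field_simps)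
    finally show ?thesis .
  qed (simp add: tree_expectation_le_1 path_length_eq_sum)
qed (simp add: tree_expectation_le_1 path_length_eq_sum)

lemma tree_expectation_sq_depth_sum:
  "t > 0 \<Longrightarrow> tree_expectation t n (\<lambda>p. sq_depth_sum p n)
     = (t + real n - 1) * ((shifted_harmonic t n)^2 + shifted_harmonic t n - shifted_harmonic2 t n)"
proof (induction n)
  case (Suc n)
  show ?case
  proof (cases "n = 0")
    case False
    define a where "a = t + real n - 1"
    define H where "H = shifted_harmonic t n"
    define G where "G = shifted_harmonic2 t n"
    from False have n: "n \<ge> 1" by simp
    with Suc have a: "a > 0" by (simp add: a_def)
    have "tree_expectation t (Suc n) (\<lambda>p. sq_depth_sum p (Suc n))
        = a * (H^2 + H - G) + 1 + 2 * (a * H / a) + a * (H^2 + H - G) / a"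
      unfolding sq_depth_sum_Suc tree_expectation_add
        tree_expectation_extend[OF Suc.prems n determined_upto_sq_depth_sum]
        tree_expectation_new_depth_sq[OF Suc.prems n] tree_expectation_path_length[OF Suc.prems]
        Suc.IH[OF Suc.prems]
      by (simp add: a_def H_def G_def)
    also have "\<dots> = (a + 1) * ((H + 1 / (a + 1))^2 + (H + 1 / (a + 1)) - (G + 1 / (a + 1)^2))"
      using a by (simp add: divide_simps) (simp add: algebra_simps power2_eq_square)
    also have "\<dots> = (t + real (Suc n) - 1)
        * ((shifted_harmonic t (Suc n))^2 + shifted_harmonic t (Suc n) - shifted_harmonic2 t (Suc n))"
      using n by (simp add: shifted_harmonic_Suc shifted_harmonic2_Suc a_def H_def G_def add_ac)
    finally show ?thesis .
  qed (simp add: tree_expectation_le_1 sq_depth_sum_def)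
qed (simp add: tree_expectation_le_1 sq_depth_sum_def)

lemma tree_expectation_path_length_sq_Suc:
  assumes "t > 0" "n \<ge> 1"
  shows "tree_expectation t (Suc n) (\<lambda>p. (path_length p (Suc n))^2)
           = tree_expectation t n (\<lambda>p. (path_length p n)^2)
             + 2 * (tree_expectation t n (\<lambda>p. path_length p n)
                    + tree_expectation t n (\<lambda>p. (path_length p n)^2) / (t + real n - 1))
             + tree_expectation t (Suc n) (\<lambda>p. (node_depth p (Suc n))^2)"
proof -
  have split: "(\<lambda>p. (path_length p (Suc n))^2)
      = (\<lambda>p. (path_length p n)^2 + 2 * (path_length p n * node_depth p (Suc n)) + (node_depth p (Suc n))^2)"
    by (simp add: fun_eq_iff path_length_Suc power2_sum mult.assoc)
  show ?thesis
    unfolding split tree_expectation_add tree_expectation_cmult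
      tree_expectation_extend[OF assms determined_upto_compose[OF determined_upto_path_length, where h = "\<lambda>x. x^2"]]
      tree_expectation_mult_new_depth[OF assms determined_upto_path_length] power2_eq_square[symmetric]
    by (rule refl)
qed

lemma tree_expectation_path_length_sq:
  "t > 0 \<Longrightarrow> tree_expectation t n (\<lambda>p. (path_length p n)^2)
     = (t + real n - 1) * (t + real n) * ipl_variance_sum t n + ((t + real n - 1) * shifted_harmonic t n)^2"
proof (induction n)
  case (Suc n)
  show ?case
  proof (cases "n = 0")
    case False
    define a where "a = t + real n - 1"
    define H where "H = shifted_harmonic t n"
    define G where "G = shifted_harmonic2 t n"
    define T where "T = ipl_variance_sum t n"
    from False have n: "n \<ge> 1" by simp
    with Suc have a: "a > 0" by (simp add: a_def)
    have "tree_expectation t (Suc n) (\<lambda>p. (path_length p (Suc n))^2)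
        = (a * (a + 1) * T + (a * H)^2) + 2 * (a * H + (a * (a + 1) * T + (a * H)^2) / a)
          + (1 + 2 * (a * H / a) + a * (H^2 + H - G) / a)"
      unfolding tree_expectation_path_length_sq_Suc[OF Suc.prems n] tree_expectation_new_depth_sq[OF Suc.prems n]
        Suc.IH[OF Suc.prems] tree_expectation_path_length[OF Suc.prems] tree_expectation_sq_depth_sum[OF Suc.prems]
      by (simp add: a_def H_def G_def T_def)
    also have "\<dots> = (a + 1) * (a + 2) * (T + (H - G) / ((a + 1) * (a + 2))) + ((a + 1) * (H + 1 / (a + 1)))^2"
      using a by (simp add: divide_simps) (simp add: algebra_simps power2_eq_square)
    also have "\<dots> = (t + real (Suc n) - 1) * (t + real (Suc n)) * ipl_variance_sum t (Suc n)
                    + ((t + real (Suc n) - 1) * shifted_harmonic t (Suc n))^2"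
      using n by (simp add: ipl_variance_sum_Suc shifted_harmonic_Suc a_def H_def G_def T_def add_ac)
    finally show ?thesis .
  qed (simp add: tree_expectation_le_1 path_length_eq_sum)
qed (simp add: tree_expectation_le_1 path_length_eq_sum)

lemma tree_expectation_path_length_centered_sq:
  assumes "t > 0"
  shows "tree_expectation t n (\<lambda>p. (path_length p n - (t + real n - 1) * shifted_harmonic t n)^2)
           = (t + real n - 1) * (t + real n) * ipl_variance_sum t n"
proof -
  define E where "E = (t + real n - 1) * shifted_harmonic t n"
  have "(\<lambda>p. (path_length p n - E)^2) = (\<lambda>p. (path_length p n)^2 - (2 * E) * path_length p n + E^2)"
    by (simp add: fun_eq_iff power2_diff)
  then have "tree_expectation t n (\<lambda>p. (path_length p n - E)^2)
      = tree_expectation t n (\<lambda>p. (path_length p n)^2) - 2 * E * tree_expectation t n (\<lambda>p. path_length p n) + E^2"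
    by (simp only: tree_expectation_add tree_expectation_diff tree_expectation_cmult tree_expectation_const[OF assms])
  also have "\<dots> = (t + real n - 1) * (t + real n) * ipl_variance_sum t n + E^2 - 2 * E * E + E^2"
    unfolding tree_expectation_path_length_sq[OF assms] tree_expectation_path_length[OF assms] E_def ..
  finally show ?thesis
    by (simp add: E_def power2_eq_square)
qed

definition normalized_path_length :: "real \<Rightarrow> nat \<Rightarrow> (nat \<Rightarrow> nat) \<Rightarrow> real" where
  "normalized_path_length t n p = path_length p n / (t + real n - 1) - shifted_harmonic t n"

lemma normalized_path_length_eq:
  assumes "t > 0"
  shows "normalized_path_length t n p
           = (path_length p n - (t + real n - 1) * shifted_harmonic t n) / (t + real n - 1)"
proof (cases "n = 0")
  case False
  with assms have "t + real n - 1 \<noteq> 0" by simp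
  then show ?thesis by (simp add: normalized_path_length_def diff_divide_distrib)
qed (simp add: normalized_path_length_def path_length_eq_sum)

lemma determined_upto_normalized_path_length: "determined_upto n (normalized_path_length t n)"
  unfolding normalized_path_length_def by (rule determined_upto_compose[OF determined_upto_path_length])

lemma tree_expectation_normalized_path_length: "t > 0 \<Longrightarrow> tree_expectation t n (normalized_path_length t n) = 0"
  unfolding normalized_path_length_def
  by (simp add: tree_expectation_divide tree_expectation_diff tree_expectation_const tree_expectation_path_length)

lemma tree_expectation_mult_normalized_path_length_Suc:
  assumes "t > 0" "n \<ge> 1" "determined_upto n F"
  shows "tree_expectation t (Suc n) (\<lambda>p. F p * normalized_path_length t (Suc n) p)
           = tree_expectation t n (\<lambda>p. F p * normalized_path_length t n p)"
proof -
  define a where "a = t + real n - 1"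
  define H where "H = shifted_harmonic t n"
  define X where "X = tree_expectation t n (\<lambda>p. F p * path_length p n)"
  define Y where "Y = tree_expectation t n F"
  have a: "a > 0" using assms by (simp add: a_def)
  have split: "tree_expectation t m (\<lambda>p. F p * normalized_path_length t k p)
      = tree_expectation t m (\<lambda>p. F p * path_length p k) / (t + real k - 1) - shifted_harmonic t k * tree_expectation t m F"
    for m k
    by (simp add: normalized_path_length_def right_diff_distrib tree_expectation_diff tree_expectation_divide
        tree_expectation_cmult[symmetric] mult.commute)
  have "tree_expectation t (Suc n) (\<lambda>p. F p * normalized_path_length t (Suc n) p)
      = (((a + 1) / a) * X + Y) / (a + 1) - (H + 1 / (a + 1)) * Y"
    using assms(2) unfolding split tree_expectation_mult_path_length_Suc[OF assms] tree_expectation_extend[OF assms]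
    by (simp add: a_def H_def X_def Y_def shifted_harmonic_Suc add_ac)
  also have "\<dots> = X / a - H * Y"
    using a by (simp add: divide_simps) (simp add: algebra_simps)
  also have "\<dots> = tree_expectation t n (\<lambda>p. F p * normalized_path_length t n p)"
    unfolding split by (simp add: a_def H_def X_def Y_def)
  finally show ?thesis .
qed

lemma determined_upto_upd_Suc:
  assumes "determined_upto (Suc n) F"
  shows "determined_upto n (\<lambda>p. F (p(Suc n := y)))"
  unfolding determined_upto_def
proof (intro allI impI)
  fix p p' :: "nat \<Rightarrow> nat"
  assume "\<forall>k\<in>{2..n}. p k = p' k"
  then have "\<forall>k\<in>{2..Suc n}. (p(Suc n := y)) k = (p'(Suc n := y)) k"
    by (auto simp: le_Suc_eq)
  with assms show "F (p(Suc n := y)) = F (p'(Suc n := y))"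
    unfolding determined_upto_def by blast
qed

lemma measurable_determined_upto:
  fixes F :: "(nat \<Rightarrow> nat) \<Rightarrow> real"
  assumes "\<And>i. i \<in> {2..n} \<Longrightarrow> P i \<in> measurable N (count_space UNIV)" and "determined_upto n F"
  shows "(\<lambda>x. F (\<lambda>i. P i x)) \<in> borel_measurable N"
  using assms
proof (induction n arbitrary: F)
  case 0
  have "F (\<lambda>i. P i x) = F (\<lambda>_. 0)" for x
    by (rule 0(2)[unfolded determined_upto_def, rule_format]) simp
  then show ?case by simp
next
  case (Suc n)
  show ?case
  proof (cases "n = 0")
    case True
    have "F (\<lambda>i. P i x) = F (\<lambda>_. 0)" for x
      by (rule Suc.prems(2)[unfolded determined_upto_def, rule_format]) (use True in simp)
    then show ?thesis by simp
  next
    case False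
    have "(\<lambda>x. F ((\<lambda>i. P i x)(Suc n := P (Suc n) x))) \<in> borel_measurable N"
    proof (rule measurable_compose_countable[where f = "\<lambda>j x. F ((\<lambda>i. P i x)(Suc n := j))"])
      show "P (Suc n) \<in> measurable N (count_space UNIV)"
        using False by (intro Suc.prems(1)) auto
      fix j :: nat
      show "(\<lambda>x. F ((\<lambda>i. P i x)(Suc n := j))) \<in> borel_measurable N"
        by (rule Suc.IH[OF _ determined_upto_upd_Suc[OF Suc.prems(2)]]) (use Suc.prems(1) in auto)
    qed
    moreover have "(\<lambda>i. P i x)(Suc n := P (Suc n) x) = (\<lambda>i. P i x)" for x
      by (rule ext) simp
    ultimately show ?thesis by simp
  qed
qed

locale hoppe_tree = prob_space M for M :: "'a measure" +
  fixes t :: real and P :: "nat \<Rightarrow> 'a \<Rightarrow> nat"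
  assumes t_pos: "t > 0"
    and measurable_P [measurable]: "\<And>i. P i \<in> measurable M (count_space UNIV)"
    and indep_P: "indep_vars (\<lambda>_. count_space UNIV) P {2..}"
    and distr_P: "\<And>i j. i \<ge> 2 \<Longrightarrow> measure M {x \<in> space M. P i x = j} = hoppe_parent_prob t i j"
begin

definition parent_event :: "nat \<Rightarrow> (nat \<Rightarrow> nat) \<Rightarrow> 'a set" where
  "parent_event n v = {x \<in> space M. \<forall>i\<in>{2..n}. P i x = v i}"

lemma parent_event_sets [measurable]: "parent_event n v \<in> sets M"
  unfolding parent_event_def by measurable

lemma prob_parent_event: "prob (parent_event n v) = parent_map_prob t n v"
proof (cases "n < 2")
  case True
  then have "parent_event n v = space M" "{2..n} = {}" by (auto simp: parent_event_def)
  then show ?thesis by (simp add: parent_map_prob_def prob_space)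
next
  case False
  then have "parent_event n v = (\<Inter>i\<in>{2..n}. P i -` {v i} \<inter> space M)"
    by (auto simp: parent_event_def)
  also have "prob \<dots> = (\<Prod>i\<in>{2..n}. prob (P i -` {v i} \<inter> space M))"
    by (rule indep_varsD[OF indep_P]) (use False in auto)
  also have "\<dots> = parent_map_prob t n v"
    unfolding parent_map_prob_def
    by (intro prod.cong refl) (auto simp: distr_P[symmetric] vimage_def Int_def conj_commute)
  finally show ?thesis .
qed

lemma AE_parent_maps: "AE x in M. \<forall>i\<in>{2..n}. P i x \<in> {1..<i}"
proof (subst AE_finite_all, simp, intro ballI)
  fix i assume i: "i \<in> {2..n}"
  then obtain m where m: "i = Suc m" "m \<ge> 1" by (cases i) auto
  have "prob {x \<in> space M. P i x \<in> {1..<i}} = prob (\<Union>j\<in>{1..<i}. {x \<in> space M. P i x = j})"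
    by (rule arg_cong[where f = prob]) auto
  also have "\<dots> = (\<Sum>j\<in>{1..<i}. prob {x \<in> space M. P i x = j})"
    by (rule finite_measure_finite_Union) (auto simp: disjoint_family_on_def)
  also have "\<dots> = 1"
    using i m parent_prob_sum[OF t_pos m(2)] by (simp add: distr_P atLeastLessThanSuc_atLeastAtMost)
  finally show "AE x in M. P i x \<in> {1..<i}"
    by (subst prob_Collect_eq_1[symmetric]) auto
qed

lemma determined_upto_AE_eq_sum:
  fixes F :: "(nat \<Rightarrow> nat) \<Rightarrow> real"
  assumes "determined_upto n F"
  shows "AE x in M. F (\<lambda>i. P i x) = (\<Sum>v\<in>parent_maps n. indicator (parent_event n v) x * F v)"
  using AE_parent_maps[of n] AE_space
proof eventually_elim
  case (elim x)
  define r where "r = restrict (\<lambda>i. P i x) {2..n}"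
  have r: "r \<in> parent_maps n" using elim by (auto simp: parent_maps_def r_def)
  have "x \<in> parent_event n v \<longleftrightarrow> v = r" if "v \<in> parent_maps n" for v
    using that elim unfolding parent_maps_def parent_event_def r_def
    by (auto simp: fun_eq_iff PiE_def extensional_def)
  then have "(\<Sum>v\<in>parent_maps n. indicator (parent_event n v) x * F v) = (\<Sum>v\<in>parent_maps n. if v = r then F v else 0)"
    by (intro sum.cong) (auto simp: indicator_def)
  also have "\<dots> = F r" using r finite_parent_maps by simp
  also have "\<dots> = F (\<lambda>i. P i x)" using assms unfolding determined_upto_def r_def by auto
  finally show ?case by simp
qed

lemma
  fixes F :: "(nat \<Rightarrow> nat) \<Rightarrow> real"
  assumes F: "determined_upto n F"
  shows integrable_determined_upto: "integrable M (\<lambda>x. F (\<lambda>i. P i x))"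
    and expectation_determined_upto: "expectation (\<lambda>x. F (\<lambda>i. P i x)) = tree_expectation t n F"
proof -
  have meas: "(\<lambda>x. F (\<lambda>i. P i x)) \<in> borel_measurable M"
    by (rule measurable_determined_upto[OF _ F]) simp
  have int: "integrable M (\<lambda>x. indicator (parent_event n v) x * F v)" for v
    by (auto simp: less_top[symmetric])
  show "integrable M (\<lambda>x. F (\<lambda>i. P i x))"
    using integrable_cong_AE[OF meas _ determined_upto_AE_eq_sum[OF F]] int by simp
  have "expectation (\<lambda>x. F (\<lambda>i. P i x)) = expectation (\<lambda>x. \<Sum>v\<in>parent_maps n. indicator (parent_event n v) x * F v)"
    by (rule integral_cong_AE[OF meas _ determined_upto_AE_eq_sum[OF F]]) simp
  also have "\<dots> = (\<Sum>v\<in>parent_maps n. F v * parent_map_prob t n v)"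
    using int by (simp add: prob_parent_event[symmetric] mult.commute)
  finally show "expectation (\<lambda>x. F (\<lambda>i. P i x)) = tree_expectation t n F"
    unfolding tree_expectation_def .
qed

lemma sets_hoppe_filtration:
  "sets (hoppe_filtration M P n) = sigma_sets (space M) {P i -` A \<inter> space M | i A. 2 \<le> i \<and> i \<le> n}"
  and space_hoppe_filtration: "space (hoppe_filtration M P n) = space M"
  unfolding hoppe_filtration_def by (auto intro!: sets_measure_of space_measure_of)

lemma subalgebra_hoppe_filtration: "subalgebra M (hoppe_filtration M P n)"
  unfolding subalgebra_def sets_hoppe_filtration space_hoppe_filtration
  by (auto intro!: sets.sigma_sets_subset measurable_sets[OF measurable_P])

lemma hoppe_filtration_mono: "n \<le> m \<Longrightarrow> sets (hoppe_filtration M P n) \<subseteq> sets (hoppe_filtration M P m)"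
  unfolding sets_hoppe_filtration by (rule sigma_sets_subseteq) (blast intro: le_trans)

lemma measurable_P_hoppe_filtration:
  "i \<in> {2..n} \<Longrightarrow> P i \<in> measurable (hoppe_filtration M P n) (count_space UNIV)"
  by (rule measurableI) (auto simp: space_hoppe_filtration sets_hoppe_filtration intro!: sigma_sets.Basic)

lemma hoppe_filtration_event_determined:
  assumes "A \<in> sets (hoppe_filtration M P n)"
  shows "\<exists>G. determined_upto n G \<and> (\<forall>x\<in>space M. x \<in> A \<longleftrightarrow> G (\<lambda>i. P i x))"
  using assms unfolding sets_hoppe_filtration
proof (induction rule: sigma_sets.induct)
  case (Basic a)
  then obtain i B where "a = P i -` B \<inter> space M" "2 \<le> i" "i \<le> n" by auto
  then show ?case
    by (intro exI[of _ "\<lambda>p. p i \<in> B"]) (auto simp: determined_upto_def)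
next
  case Empty
  show ?case by (intro exI[of _ "\<lambda>_. False"]) (simp add: determined_upto_const)
next
  case (Compl a)
  then obtain G where "determined_upto n G" "\<forall>x\<in>space M. x \<in> a \<longleftrightarrow> G (\<lambda>i. P i x)" by blast
  then show ?case
    by (intro exI[of _ "\<lambda>p. \<not> G p"]) (auto intro: determined_upto_compose)
next
  case (Union a)
  then obtain G where G: "\<And>k. determined_upto n (G k)" "\<And>k. \<forall>x\<in>space M. x \<in> a k \<longleftrightarrow> G k (\<lambda>i. P i x)"
    by metis
  then have "determined_upto n (\<lambda>p. \<exists>k. G k p)"
    unfolding determined_upto_def by blast
  with G(2) show ?case
    by (intro exI[of _ "\<lambda>p. \<exists>k. G k p"]) auto
qed

lemma expectation_path_length:
  "expectation (\<lambda>x. path_length (\<lambda>i. P i x) n) = (t + real n - 1) * shifted_harmonic t n"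
  by (simp add: expectation_determined_upto[OF determined_upto_path_length] tree_expectation_path_length t_pos)

lemma variance_path_length:
  "variance (\<lambda>x. path_length (\<lambda>i. P i x) n) = (t + real n - 1) * (t + real n) * ipl_variance_sum t n"
  unfolding expectation_path_length
  using expectation_determined_upto[OF determined_upto_compose[OF determined_upto_path_length,
        where h = "\<lambda>y. (y - (t + real n - 1) * shifted_harmonic t n)^2"]]
  by (simp add: tree_expectation_path_length_centered_sq t_pos)

lemma expectation_normalized_path_length: "expectation (\<lambda>x. normalized_path_length t n (\<lambda>i. P i x)) = 0"
  by (simp add: expectation_determined_upto[OF determined_upto_normalized_path_length]
      tree_expectation_normalized_path_length t_pos)

lemma cond_exp_normalized_path_length:
  assumes n: "n \<ge> 1"
  shows "AE x in M. real_cond_exp M (hoppe_filtration M P n) (\<lambda>x. normalized_path_length t (Suc n) (\<lambda>i. P i x)) x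
                      = normalized_path_length t n (\<lambda>i. P i x)"
proof -
  interpret S: sigma_finite_subalgebra M "hoppe_filtration M P n"
    by (rule finite_measure_subalgebra_is_sigma_finite)
       (simp add: finite_measure_subalgebra_def finite_measure_subalgebra_axioms_def
        subalgebra_hoppe_filtration finite_measure_axioms)
  show ?thesis
  proof (rule S.real_cond_exp_charact)
    fix A assume "A \<in> sets (hoppe_filtration M P n)"
    then obtain G where G: "determined_upto n G" "\<forall>x\<in>space M. x \<in> A \<longleftrightarrow> G (\<lambda>i. P i x)"
      using hoppe_filtration_event_determined by blast
    define g where "g p = (if G p then 1 else 0 :: real)" for p
    have g: "determined_upto n g"
      unfolding g_def by (rule determined_upto_compose[OF G(1)])
    have "set_lebesgue_integral M A (\<lambda>x. normalized_path_length t m (\<lambda>i. P i x))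
        = expectation (\<lambda>x. g (\<lambda>i. P i x) * normalized_path_length t m (\<lambda>i. P i x))" for m
      unfolding set_lebesgue_integral_def using G(2)
      by (intro Bochner_Integration.integral_cong) (auto simp: g_def indicator_def)
    then show "set_lebesgue_integral M A (\<lambda>x. normalized_path_length t (Suc n) (\<lambda>i. P i x))
             = set_lebesgue_integral M A (\<lambda>x. normalized_path_length t n (\<lambda>i. P i x))"
      using expectation_determined_upto[OF determined_upto_compose2[OF determined_upto_mono[OF g]
            determined_upto_normalized_path_length], of "Suc n"]
        expectation_determined_upto[OF determined_upto_compose2[OF g determined_upto_normalized_path_length]]
        tree_expectation_mult_normalized_path_length_Suc[OF t_pos n g]
      by simp
  qed (auto intro: integrable_determined_upto determined_upto_normalized_path_length
        measurable_determined_upto[OF measurable_P_hoppe_filtration])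
qed

lemma martingale_normalized_path_length:
  "real_martingale_from 1 M (hoppe_filtration M P) (\<lambda>n x. normalized_path_length t n (\<lambda>i. P i x))"
  unfolding real_martingale_from_def
proof (intro conjI allI impI)
  fix n :: nat assume "1 \<le> n"
  then show "AE x in M. real_cond_exp M (hoppe_filtration M P n) (\<lambda>x. normalized_path_length t (Suc n) (\<lambda>i. P i x)) x
               = normalized_path_length t n (\<lambda>i. P i x)"
    by (rule cond_exp_normalized_path_length)
next
  fix n :: nat
  show "(\<lambda>x. normalized_path_length t n (\<lambda>i. P i x)) \<in> borel_measurable (hoppe_filtration M P n)"
    by (rule measurable_determined_upto[OF measurable_P_hoppe_filtration determined_upto_normalized_path_length])
qed (auto simp: subalgebra_hoppe_filtration hoppe_filtration_mono
      integrable_determined_upto[OF determined_upto_normalized_path_length])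

end

theorem theorem2p6:
  fixes M :: "'a measure" and theta :: real and P :: "nat \<Rightarrow> 'a \<Rightarrow> nat"
  assumes M: "prob_space M"
    and theta_pos: "theta > 0"
    and meas: "\<And>i. P i \<in> measurable M (count_space UNIV)"
    and indep: "prob_space.indep_vars M (\<lambda>_. count_space UNIV) P {2..}"
    and distr: "\<And>i j. i \<ge> 2 \<Longrightarrow>
                  measure M {x \<in> space M. P i x = j} = hoppe_parent_prob theta i j"
  defines "I \<equiv> (\<lambda>n x. real (hoppe_ipl (\<lambda>i. P i x) n))"
  shows "(\<forall>n\<ge>1. prob_space.expectation M (I n)
                   = (theta + real n - 1) * (\<Sum>i=1..n-1. 1 / (theta + real i)))
     \<and> (\<lambda>n. prob_space.expectation M (I n)
              - (real n * ln (real n) - Digamma (theta + 1) * real n)) \<in> o(\<lambda>n. real n)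
     \<and> (\<lambda>n. prob_space.variance M (I n)
              - (2 / (theta + 1) - Polygamma 1 (theta + 1)) * (real n)^2) \<in> o(\<lambda>n. (real n)^2)
     \<and> real_martingale_from 1 M (hoppe_filtration M P)
         (\<lambda>n x. (I n x - prob_space.expectation M (I n)) / (theta + real n - 1))
     \<and> (\<forall>n\<ge>1. prob_space.expectation M
         (\<lambda>x. (I n x - prob_space.expectation M (I n)) / (theta + real n - 1)) = 0)"
proof -
  interpret hoppe_tree M theta P
    using M theta_pos meas indep distr by (simp add: hoppe_tree_def hoppe_tree_axioms_def)
  have I: "I n = (\<lambda>x. path_length (\<lambda>i. P i x) n)" for n
    by (simp add: I_def path_length_def)
  have E: "expectation (I n) = (theta + real n - 1) * shifted_harmonic theta n" for n
    unfolding I by (rule expectation_path_length)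
  have V: "variance (I n) = (theta + real n - 1) * (theta + real n) * ipl_variance_sum theta n" for n
    unfolding I by (rule variance_path_length)
  have X: "(I n x - expectation (I n)) / (theta + real n - 1) = normalized_path_length theta n (\<lambda>i. P i x)"
    for n x
    unfolding E normalized_path_length_eq[OF theta_pos] by (simp add: I)
  have "shifted_harmonic theta n = (\<Sum>i=1..n-1. 1 / (theta + real i))" if "n \<ge> 1" for n
    using that by (cases n) (simp_all add: shifted_harmonic_def atLeastLessThanSuc_atLeastAtMost)
  \<comment> \<open>X and V are unfolded before E, which would rewrite inside their left-hand sides\<close>
  then show ?thesis
    unfolding X V
    using shifted_harmonic_asymp[OF theta_pos] ipl_variance_sum_asymp[OF theta_pos]
      martingale_normalized_path_length expectation_normalized_path_length
    by (simp add: E)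
qed

end
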